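(* Let $\mathsf X$ be a subcategory of the cluster tube $\mathsf C_n$ with corresponding $n$-periodic collection of arcs $\mathcal X$, and suppose $\mathsf X={}^{\perp}(\mathsf X^{\perp})$ (equivalently, $\mathcal X$ is an $n$-periodic Ptolemy diagram). Then exactly one of the following holds: (i) $\mathsf X$ has only finitely many indecomposable objects (up to isomorphism), all of level $\le n-1$, and $\mathsf X^{\perp}$ has infinitely many indecomposable objects; (ii) $\mathsf X$ has infinitely many indecomposable objects, and $\mathsf X^{\perp}$ has only finitely many indecomposable objects, all of level $\le n-1$.
   Context: Fix a field $K$ and an integer $n\ge 1$. The cluster tube $\mathsf C_n=D^b(\mathsf T_n)/(\tau^{-1}\circ\Sigma)$ is the cluster category of the tube category $\mathsf T_n$ of nilpotent finite-dimensional representations of the cyclically oriented cyclic quiver with $n$ vertices; it is a Krull–Schmidt, Hom-finite, 2-Calabi–Yau triangulated category with $\Sigma=\tau$. An arc of the $\infty$-gon is a pair $(i,j)$ of integers with $j-i\ge 2$; its length is $j-i$. Isoclasses of indecomposable objects of $\mathsf C_n$ correspond bijectively to classes $[(i,j)]=\{(i+rn,j+rn):r\in\mathbb Z\}$ of arcs, with $\Sigma[(i,j)]=\tau[(i,j)]=[(i-1,j-1)]$; the level of $[(i,j)]$ is $j-i-1$. Subcategories are full and closed under isomorphisms, finite direct sums and direct summands, and correspond to $n$-periodic collections of arcs (the arcs representing their indecomposables). $\mathsf X^{\perp}=\{c:\operatorname{Hom}(x,c)=0\ \forall x\in\mathsf X\}$, ${}^{\perp}\mathsf Y=\{c:\operatorname{Hom}(c,y)=0\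 \forall y\in\mathsf Y\}$. Two arcs $(i,j),(k,l)$ cross if $i<k<j<l$ or $k<i<l<j$. A Ptolemy diagram of the $\infty$-gon is a collection $\mathcal X$ of arcs such that whenever $(i,j),(r,s)\in\mathcal X$ cross with $i<r$, each of $(i,r),(i,s),(r,j),(j,s)$ which is an arc lies in $\mathcal X$. *)

theory Defs
  imports Main
begin

(* Combinatorial model of the cluster tube C_n.
   Arcs of the infinity-gon: pairs (i,j) of integers with j - i >= 2. *)
type_synonym arc = "int \<times> int"

definition is_arc :: "arc \<Rightarrow> bool" where
  "is_arc a \<longleftrightarrow> snd a - fst a \<ge> 2"

(* The class [(i,j)] of an arc: an isoclass of indecomposables of C_n. *)
definition arc_class :: "nat \<Rightarrow> arc \<Rightarrow> arc set" where
  "arc_class n a = {(fst a + r * int n, snd a + r * int n) | r. True}"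

definition level :: "arc \<Rightarrow> int" where
  "level a = snd a - fst a - 1"

(* subcategories of C_n = n-periodic collections of arcs *)
definition periodic_arcs :: "nat \<Rightarrow> arc set \<Rightarrow> bool" where
  "periodic_arcs n X \<longleftrightarrow> (\<forall>a\<in>X. is_arc a) \<and>
     (\<forall>a\<in>X. \<forall>r::int. (fst a + r * int n, snd a + r * int n) \<in> X)"

definition crosses :: "arc \<Rightarrow> arc \<Rightarrow> bool" where
  "crosses a b \<longleftrightarrow> (fst a < fst b \<and> fst b < snd a \<and> snd a < snd b)
                   \<or> (fst b < fst a \<and> fst a < snd b \<and> snd b < snd a)"

(* Ext^1([a],[b]) <> 0 iff some representative of [a] crosses some representative of [b]. *)
definition ext_nz :: "nat \<Rightarrow> arc \<Rightarrow> arc \<Rightarrow> bool" where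
  "ext_nz n a b \<longleftrightarrow> (\<exists>a'\<in>arc_class n a. \<exists>b'\<in>arc_class n b. crosses a' b')"

definition desusp :: "arc \<Rightarrow> arc" where
  "desusp a = (fst a + 1, snd a + 1)"

(* Hom(a,c) = Ext^1(a, Sigma^{-1} c) *)
definition hom_nz :: "nat \<Rightarrow> arc \<Rightarrow> arc \<Rightarrow> bool" where
  "hom_nz n a c \<longleftrightarrow> ext_nz n a (desusp c)"

definition right_perp :: "nat \<Rightarrow> arc set \<Rightarrow> arc set" where
  "right_perp n X = {c. is_arc c \<and> (\<forall>x\<in>X. \<not> hom_nz n x c)}"

definition left_perp :: "nat \<Rightarrow> arc set \<Rightarrow> arc set" where
  "left_perp n Y = {c. is_arc c \<and> (\<forall>y\<in>Y. \<not> hom_nz n c y)}"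

definition indecs :: "nat \<Rightarrow> arc set \<Rightarrow> arc set set" where
  "indecs n X = arc_class n ` X"

end

theory Submission
  imports Defs
begin

text \<open>For an \<open>n\<close>-periodic collection, \<open>Hom\<close>-vanishing only has to be tested on single
  crossings with \<open>\<Sigma>\<^sup>-\<^sup>1\<close>-shifted arcs. If \<open>X\<close> contains an arc longer than \<open>n\<close>, then
  \<open>X = \<^sup>\<perp>(X\<^sup>\<perp>)\<close> lets us lengthen it by \<open>n\<close> again and again (a crossing of the
  lengthened arc is a crossing of the arc or of its translate by \<open>n\<close>), so \<open>X\<close> has arcs of
  every length; any arc of \<open>X\<^sup>\<perp>\<close> longer than \<open>n\<close> would then be crossed by a translate of one
  of them. If all arcs of \<open>X\<close> have length at most \<open>n\<close>, some point \<open>e\<close> lies under no arc of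
  \<open>X\<close> (otherwise the shifted arcs of \<open>X\<^sup>\<perp>\<close> would cover every point too, while a
  covering by arcs of bounded length is crossed by every other covering), and then all arcs starting at \<open>e - 1\<close> and
  of length a multiple \<open>\<ge> 2\<close> of \<open>n\<close> lie in \<open>X\<^sup>\<perp>\<close>.\<close>

definition translate :: "int \<Rightarrow> arc \<Rightarrow> arc" where
  "translate t a = (fst a + t, snd a + t)"

definition arc_length :: "arc \<Rightarrow> int" where
  "arc_length a = snd a - fst a"

definition encloses :: "arc \<Rightarrow> int \<Rightarrow> bool" where
  "encloses a e \<longleftrightarrow> fst a < e \<and> e < snd a"

lemma fst_translate [simp]: "fst (translate t a) = fst a + t"
  and snd_translate [simp]: "snd (translate t a) = snd a + t"
  by (simp_all add: translate_def)

lemma translate_translate [simp]: "translate s (translate t a) = translate (t + s) a"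
  by (simp add: translate_def algebra_simps)

lemma translate_0 [simp]: "translate 0 a = a"
  by (simp add: translate_def)

lemma arc_length_translate [simp]: "arc_length (translate t a) = arc_length a"
  by (simp add: arc_length_def)

lemma level_eq_arc_length: "level a = arc_length a - 1"
  by (simp add: level_def arc_length_def)

lemma crosses_translate [simp]: "crosses (translate t a) (translate t b) \<longleftrightarrow> crosses a b"
  by (auto simp: crosses_def)

lemma crosses_sym: "crosses a b \<longleftrightarrow> crosses b a"
  by (auto simp: crosses_def)

lemma crosses_imp_encloses_end: "crosses a b \<Longrightarrow> encloses a (fst b) \<or> encloses a (snd b)"
  by (auto simp: crosses_def encloses_def)

lemma encloses_translate_iff: "encloses (translate t a) e \<longleftrightarrow> encloses a (e - t)"
  by (auto simp: encloses_def)

lemma arc_class_eq: "arc_class n a = range (\<lambda>r. translate (r * int n) a)"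
  by (auto simp: arc_class_def translate_def)

lemma periodic_arcs_translate:
  "periodic_arcs n X \<Longrightarrow> x \<in> X \<Longrightarrow> translate (r * int n) x \<in> X"
  by (simp add: periodic_arcs_def translate_def)

lemma ext_nz_iff: "ext_nz n a b \<longleftrightarrow> (\<exists>r. crosses a (translate (r * int n) b))"
proof
  assume "ext_nz n a b"
  then obtain r s where "crosses (translate (r * int n) a) (translate (s * int n) b)"
    by (auto simp: ext_nz_def arc_class_eq)
  then have "crosses a (translate ((s - r) * int n) b)"
    using crosses_translate[of "r * int n" a "translate ((s - r) * int n) b"]
    by (simp add: algebra_simps)
  then show "\<exists>r. crosses a (translate (r * int n) b)" ..
next
  assume "\<exists>r. crosses a (translate (r * int n) b)"
  then obtain r where "crosses (translate (0 * int n) a) (translate (r * int n) b)" by auto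
  then show "ext_nz n a b" unfolding ext_nz_def arc_class_eq by blast
qed

lemma hom_nz_iff: "hom_nz n a c \<longleftrightarrow> (\<exists>r. crosses a (translate (r * int n + 1) c))"
proof -
  have "desusp c = translate 1 c" by (simp add: desusp_def translate_def)
  then show ?thesis by (simp add: hom_nz_def ext_nz_iff add.commute)
qed

lemma periodic_right_perp: "periodic_arcs n (right_perp n X)"
  unfolding periodic_arcs_def
proof (intro conjI ballI allI)
  fix c r assume c: "c \<in> right_perp n X"
  have "\<not> hom_nz n x (translate (r * int n) c)" if "x \<in> X" for x
  proof -
    have "\<not> crosses x (translate ((s + r) * int n + 1) c)" for s
      using c that by (auto simp: right_perp_def hom_nz_iff)
    then show ?thesis by (simp add: hom_nz_iff algebra_simps)
  qed
  then show "(fst c + r * int n, snd c + r * int n) \<in> right_perp n X"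
    using c by (simp add: right_perp_def translate_def is_arc_def)
qed (simp add: right_perp_def)

lemma mem_right_perp_periodic:
  assumes "periodic_arcs n X"
  shows "c \<in> right_perp n X \<longleftrightarrow> is_arc c \<and> (\<forall>x\<in>X. \<not> crosses x (translate 1 c))"
proof -
  have "\<not> crosses x (translate (r * int n + 1) c)"
    if "x \<in> X" "\<forall>x\<in>X. \<not> crosses x (translate 1 c)" for x r
  proof
    assume "crosses x (translate (r * int n + 1) c)"
    then have "crosses (translate (- r * int n) x) (translate 1 c)"
      using crosses_translate[of "- r * int n" x "translate (r * int n + 1) c"] by simp
    then show False using that periodic_arcs_translate[OF assms] by blast
  qed
  then show ?thesis
    by (auto simp: right_perp_def hom_nz_iff) (metis add_0 mult_zero_left)
qed

lemma mem_left_perp_periodic: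
  assumes "periodic_arcs n Y"
  shows "c \<in> left_perp n Y \<longleftrightarrow> is_arc c \<and> (\<forall>y\<in>Y. \<not> crosses c (translate 1 y))"
proof -
  have "\<not> crosses c (translate (r * int n + 1) y)"
    if "y \<in> Y" "\<forall>y\<in>Y. \<not> crosses c (translate 1 y)" for y r
  proof -
    have "translate (r * int n + 1) y = translate 1 (translate (r * int n) y)" by simp
    then show ?thesis using that(2) periodic_arcs_translate[OF assms that(1)] by metis
  qed
  then show ?thesis
    by (auto simp: left_perp_def hom_nz_iff) (metis add_0 mult_zero_left)
qed


lemma arc_class_translate: "arc_class n (translate (r * int n) a) = arc_class n a"
proof -
  have "range (\<lambda>s. translate (s * int n) (translate (r * int n) a))
        = range (\<lambda>s. translate (s * int n) a)"
  proof (intro equalityI image_subsetI)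
    fix s
    show "translate (s * int n) (translate (r * int n) a) \<in> range (\<lambda>s. translate (s * int n) a)"
      by (rule range_eqI[of _ _ "r + s"]) (simp add: algebra_simps)
    show "translate (s * int n) a \<in> range (\<lambda>s. translate (s * int n) (translate (r * int n) a))"
      by (rule range_eqI[of _ _ "s - r"]) (simp add: algebra_simps)
  qed
  then show ?thesis by (simp add: arc_class_eq)
qed

lemma arc_length_image_arc_class: "arc_length ` arc_class n a = {arc_length a}"
  by (simp add: arc_class_eq image_image)

lemma finite_indecs_of_bounded_length:
  assumes n: "n \<ge> 1" and S: "\<forall>a\<in>S. is_arc a \<and> arc_length a \<le> int n"
  shows "finite (indecs n S)"
proof -
  have "indecs n S \<subseteq> arc_class n ` ({0..<int n} \<times> {0..2 * int n})"
  proof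
    fix C assume "C \<in> indecs n S"
    then obtain a where a: "a \<in> S" "C = arc_class n a" by (auto simp: indecs_def)
    define a' where "a' = translate (- (fst a div int n) * int n) a"
    have "fst a' = fst a mod int n"
      by (simp add: a'_def minus_div_mult_eq_mod[symmetric])
    moreover have "0 \<le> fst a mod int n" "fst a mod int n < int n" using n by simp_all
    moreover have "2 \<le> snd a' - fst a'" "snd a' - fst a' \<le> int n"
      using S a(1) by (simp_all add: a'_def is_arc_def arc_length_def)
    ultimately have "0 \<le> fst a'" "fst a' < int n" "0 \<le> snd a'" "snd a' \<le> 2 * int n"
      by linarith+
    then have "a' \<in> {0..<int n} \<times> {0..2 * int n}" by (simp add: mem_Times_iff)
    moreover have "C = arc_class n a'"
      unfolding a(2) a'_def by (rule arc_class_translate[symmetric])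
    ultimately show "C \<in> arc_class n ` ({0..<int n} \<times> {0..2 * int n})" by blast
  qed
  then show ?thesis by (rule finite_subset) simp
qed

lemma infinite_indecs_of_unbounded_length:
  assumes unbounded: "\<forall>k. \<exists>a\<in>S. arc_length a \<ge> k"
  shows "infinite (indecs n S)"
proof
  assume "finite (indecs n S)"
  then have "finite (\<Union>C\<in>indecs n S. arc_length ` C)"
    by (intro finite_UN_I) (auto simp: indecs_def arc_length_image_arc_class)
  moreover have "arc_length ` S = (\<Union>C\<in>indecs n S. arc_length ` C)"
    by (auto simp: indecs_def arc_length_image_arc_class)
  ultimately have fin: "finite (arc_length ` S)" by simp
  obtain a where "a \<in> S" "arc_length a \<ge> Max (insert 0 (arc_length ` S)) + 1"
    using unbounded by blast
  moreover have "arc_length a \<le> Max (insert 0 (arc_length ` S))"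
    using fin calculation(1) by (intro Max_ge) auto
  ultimately show False by linarith
qed

text \<open>Move the start of \<open>x\<close> into the \<open>n\<close> points following the start of \<open>b\<close>.\<close>
lemma crosses_translate_of_long:
  assumes n: "n \<ge> 1" and b: "arc_length b > int n" and x: "arc_length x \<ge> arc_length b"
  shows "\<exists>r. crosses (translate (r * int n) x) b"
proof
  define r where "r = (fst b - fst x) div int n + 1"
  have "fst x + r * int n = fst b + int n - (fst b - fst x) mod int n"
    by (simp add: r_def algebra_simps minus_mod_eq_mult_div[symmetric])
  moreover have "0 \<le> (fst b - fst x) mod int n" "(fst b - fst x) mod int n < int n"
    using n by simp_all
  ultimately show "crosses (translate (r * int n) x) b"
    using b x by (auto simp: crosses_def arc_length_def)
qed

lemma crosses_extended_arc:
  assumes "arc_length a > m" "crosses (fst a, snd a + m) b"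
  shows "crosses a b \<or> crosses (translate m a) b"
  using assms by (auto simp: crosses_def arc_length_def)

lemma closed_extend_long_arc:
  assumes per: "periodic_arcs n X" and closed: "X = left_perp n (right_perp n X)"
    and a: "a \<in> X" "arc_length a > int n"
  shows "(fst a, snd a + int n) \<in> X"
proof -
  have "\<not> crosses (fst a, snd a + int n) (translate 1 y)" if y: "y \<in> right_perp n X" for y
  proof
    assume "crosses (fst a, snd a + int n) (translate 1 y)"
    then have "crosses a (translate 1 y) \<or> crosses (translate (1 * int n) a) (translate 1 y)"
      using crosses_extended_arc a(2) by simp
    moreover have "translate (1 * int n) a \<in> X" using periodic_arcs_translate[OF per a(1)] .
    ultimately show False using y a(1) mem_right_perp_periodic[OF per] by blast
  qed
  moreover have "is_arc (fst a, snd a + int n)"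
    using a(2) per a(1) by (auto simp: periodic_arcs_def is_arc_def)
  ultimately show ?thesis
    using closed mem_left_perp_periodic[OF periodic_right_perp] by blast
qed

lemma closed_unbounded_length:
  assumes n: "n \<ge> 1" and per: "periodic_arcs n X"
    and closed: "X = left_perp n (right_perp n X)"
    and a: "a \<in> X" "arc_length a > int n"
  shows "\<forall>k. \<exists>x\<in>X. arc_length x \<ge> k"
proof
  fix k :: int
  have ext: "(fst a, snd a + int m * int n) \<in> X" for m
  proof (induction m)
    case (Suc m)
    have "arc_length (fst a, snd a + int m * int n) > int n"
      using a(2) mult_nonneg_nonneg[of "int m" "int n"]
      unfolding arc_length_def fst_conv snd_conv by linarith
    from closed_extend_long_arc[OF per closed Suc this] show ?case
      by (simp add: algebra_simps)
  qed (use a(1) in simp)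
  have "int (nat k) * int n \<ge> int (nat k) * 1" using n by (intro mult_left_mono) auto
  then have "arc_length (fst a, snd a + int (nat k) * int n) \<ge> k"
    using a(2) unfolding arc_length_def fst_conv snd_conv by linarith
  then show "\<exists>x\<in>X. arc_length x \<ge> k" using ext by blast
qed

lemma right_perp_bounded_length:
  assumes n: "n \<ge> 1" and per: "periodic_arcs n X"
    and unbounded: "\<forall>k. \<exists>x\<in>X. arc_length x \<ge> k" and c: "c \<in> right_perp n X"
  shows "arc_length c \<le> int n"
proof (rule ccontr)
  assume "\<not> ?thesis"
  then have long: "arc_length (translate 1 c) > int n" by simp
  obtain x where x: "x \<in> X" "arc_length x \<ge> arc_length (translate 1 c)"
    using unbounded by blast
  obtain r where "crosses (translate (r * int n) x) (translate 1 c)"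
    using crosses_translate_of_long[OF n long x(2)] by blast
  moreover have "translate (r * int n) x \<in> X" using periodic_arcs_translate[OF per x(1)] .
  ultimately show False using c mem_right_perp_periodic[OF per] by blast
qed

lemma right_perp_of_gap:
  assumes n: "n \<ge> 1" and per: "periodic_arcs n X" and gap: "\<forall>x\<in>X. \<not> encloses x e"
    and k: "k \<ge> 2"
  shows "(e - 1, e - 1 + int k * int n) \<in> right_perp n X"
proof -
  have "\<not> crosses x (e, e + int k * int n)" if x: "x \<in> X" for x
  proof
    assume "crosses x (e, e + int k * int n)"
    then have "encloses x e \<or> encloses x (e + int k * int n)"
      using crosses_imp_encloses_end by fastforce
    moreover have "\<not> encloses (translate (- int k * int n) x) e"
      using gap periodic_arcs_translate[OF per x] by blast
    ultimately show False using gap x by (simp add: encloses_translate_iff)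
  qed
  moreover have "int k * int n \<ge> 2 * 1" using k n by (intro mult_mono) auto
  ultimately show ?thesis
    by (simp add: mem_right_perp_periodic[OF per] is_arc_def translate_def)
qed

lemma left_perp_of_gap:
  assumes n: "n \<ge> 1" and per: "periodic_arcs n Y"
    and gap: "\<forall>y\<in>Y. \<not> encloses (translate 1 y) f"
  shows "(f, f + 2 * int n) \<in> left_perp n Y"
proof -
  have "\<not> crosses (f, f + 2 * int n) (translate 1 y)" if y: "y \<in> Y" for y
  proof
    assume "crosses (f, f + 2 * int n) (translate 1 y)"
    then have "encloses (translate 1 y) f \<or> encloses (translate 1 y) (f + 2 * int n)"
      using crosses_imp_encloses_end crosses_sym by fastforce
    moreover have "\<not> encloses (translate 1 (translate (- 2 * int n) y)) f"
      using gap periodic_arcs_translate[OF per y] by blast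
    ultimately show False using gap y by (simp add: encloses_translate_iff algebra_simps)
  qed
  then show ?thesis using n by (simp add: mem_left_perp_periodic[OF per] is_arc_def)
qed

text \<open>Compare an arc \<open>x\<^sub>0\<close> of maximal length with an arc of \<open>B\<close> enclosing its start,
  and that one with an arc of \<open>X\<close> enclosing its own start: non-crossing forces the
  last arc to be longer than \<open>x\<^sub>0\<close>.\<close>
lemma noncrossing_covers_infinite_lengths:
  assumes cover_X: "\<forall>e. \<exists>x\<in>X. encloses x e" and cover_B: "\<forall>e. \<exists>b\<in>B. encloses b e"
    and noncrossing: "\<forall>x\<in>X. \<forall>b\<in>B. \<not> crosses x b"
  shows "infinite (arc_length ` X)"
proof
  assume fin: "finite (arc_length ` X)"
  have "arc_length ` X \<noteq> {}" using cover_X by blast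
  then have "Max (arc_length ` X) \<in> arc_length ` X" using Max_in[OF fin] by blast
  then obtain x0 where x0: "x0 \<in> X" "arc_length x0 = Max (arc_length ` X)" by force
  obtain b where b: "b \<in> B" "encloses b (fst x0)" using cover_B by blast
  then have "snd b \<ge> snd x0"
    using noncrossing x0(1) crosses_sym by (fastforce simp: crosses_def encloses_def)
  obtain x where x: "x \<in> X" "encloses x (fst b)" using cover_X by blast
  then have "snd x \<ge> snd b" using noncrossing b(1) by (fastforce simp: crosses_def encloses_def)
  have "arc_length x > arc_length x0"
    using \<open>snd b \<ge> snd x0\<close> \<open>snd x \<ge> snd b\<close> b(2) x(2)
    by (simp add: arc_length_def encloses_def)
  moreover have "arc_length x \<le> arc_length x0" using fin x(1) x0(2) by simp
  ultimately show False by simp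
qed

lemma closed_bounded_has_gap:
  assumes n: "n \<ge> 1" and per: "periodic_arcs n X"
    and closed: "X = left_perp n (right_perp n X)"
    and bounded: "\<forall>x\<in>X. arc_length x \<le> int n"
  shows "\<exists>e. \<forall>x\<in>X. \<not> encloses x e"
proof (rule ccontr)
  assume "\<not> ?thesis"
  then have cover_X: "\<forall>e. \<exists>x\<in>X. encloses x e" by blast
  have "\<exists>y\<in>right_perp n X. encloses (translate 1 y) f" for f
  proof (rule ccontr)
    assume "\<not> ?thesis"
    then have "(f, f + 2 * int n) \<in> X"
      using left_perp_of_gap[OF n periodic_right_perp] closed by blast
    then show False using bounded n by (fastforce simp: arc_length_def)
  qed
  then have cover_B: "\<forall>e. \<exists>b\<in>translate 1 ` right_perp n X. encloses b e" by blast
  have "\<forall>x\<in>X. \<forall>b\<in>translate 1 ` right_perp n X. \<not> crosses x b"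
    using mem_right_perp_periodic[OF per] by blast
  moreover have "finite (arc_length ` X)"
  proof (rule finite_subset)
    show "arc_length ` X \<subseteq> {0..int n}"
    proof (rule image_subsetI)
      fix x assume "x \<in> X"
      then have "is_arc x" "arc_length x \<le> int n"
        using bounded per by (simp_all add: periodic_arcs_def)
      then show "arc_length x \<in> {0..int n}" by (simp add: is_arc_def arc_length_def)
    qed
  qed simp
  ultimately show False using noncrossing_covers_infinite_lengths cover_X cover_B by blast
qed

lemma right_perp_unbounded_of_gap:
  assumes n: "n \<ge> 1" and per: "periodic_arcs n X" and gap: "\<forall>x\<in>X. \<not> encloses x e"
  shows "\<forall>k. \<exists>c\<in>right_perp n X. arc_length c \<ge> k"
proof
  fix k :: int
  define m where "m = nat k + 2"
  have "int m * int n \<ge> int m * 1" using n by (intro mult_left_mono) auto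
  moreover have "int m \<ge> k" by (simp add: m_def)
  ultimately have "arc_length (e - 1, e - 1 + int m * int n) \<ge> k"
    unfolding arc_length_def fst_conv snd_conv by linarith
  moreover have "(e - 1, e - 1 + int m * int n) \<in> right_perp n X"
    using right_perp_of_gap[OF n per gap, of m] by (simp add: m_def)
  ultimately show "\<exists>c\<in>right_perp n X. arc_length c \<ge> k" by blast
qed

theorem mainTheorem4:
  fixes n :: nat and X :: "arc set"
  assumes "n \<ge> 1"
    and "periodic_arcs n X"
    and "X = left_perp n (right_perp n X)"
  shows "let P1 = (finite (indecs n X) \<and> (\<forall>a\<in>X. level a \<le> int n - 1)
                   \<and> infinite (indecs n (right_perp n X)));
             P2 = (infinite (indecs n X) \<and> finite (indecs n (right_perp n X))
                   \<and> (\<forall>a\<in>right_perp n X. level a \<le> int n - 1))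
         in (P1 \<or> P2) \<and> \<not> (P1 \<and> P2)"
proof (cases "\<exists>a\<in>X. arc_length a > int n")
  case True
  then have unbounded: "\<forall>k. \<exists>x\<in>X. arc_length x \<ge> k"
    using closed_unbounded_length[OF assms] by blast
  have bounded: "\<forall>c\<in>right_perp n X. is_arc c \<and> arc_length c \<le> int n"
    using right_perp_bounded_length[OF assms(1,2) unbounded] by (simp add: right_perp_def)
  have "infinite (indecs n X)" using infinite_indecs_of_unbounded_length[OF unbounded] .
  moreover have "finite (indecs n (right_perp n X))"
    using finite_indecs_of_bounded_length[OF assms(1) bounded] .
  moreover have "\<forall>c\<in>right_perp n X. level c \<le> int n - 1"
    using bounded by (auto simp: level_eq_arc_length)
  ultimately show ?thesis by (simp add: Let_def)
next
  case False
  then have bounded: "\<forall>x\<in>X. is_arc x \<and> arc_length x \<le> int n"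
    using assms(2) by (auto simp: periodic_arcs_def)
  obtain e where "\<forall>x\<in>X. \<not> encloses x e"
    using closed_bounded_has_gap[OF assms] bounded by blast
  then have "infinite (indecs n (right_perp n X))"
    using right_perp_unbounded_of_gap[OF assms(1,2)] infinite_indecs_of_unbounded_length by blast
  moreover have "finite (indecs n X)" using finite_indecs_of_bounded_length[OF assms(1) bounded] .
  moreover have "\<forall>x\<in>X. level x \<le> int n - 1" using bounded by (auto simp: level_eq_arc_length)
  ultimately show ?thesis by (simp add: Let_def)
qed

end
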